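(* Let $0<p\le q\le1$, let $(\mathcal M,d,0)$ be a finite pointed $q$-metric space, $0\in\mathcal N\subset\mathcal M$, $a\in\mathbb R^{\mathcal N\setminus\{0\}}$ and $T\in\mathcal T(\mathcal M)$. Then $T_{d_T}(a)=T_d(a)$ and \[\Big\|\sum_{x\in\mathcal N\setminus\{0\}}a_x\delta(x)\Big\|_{\mathcal F_p(\mathcal N_T)}\ge\Big\|\sum_{x\in\mathcal N\setminus\{0\}}a_x\delta(x)\Big\|_{\mathcal F_p(\mathcal N)}.\] In particular, if $a\in\mathbb R^{\mathcal N\setminus\{0\}}$ and $T\in\mathcal T(\mathcal M)$ satisfy $T_d(a)=1=\|\sum_{x\in\mathcal N\setminus\{0\}}a_x\delta(x)\|_{\mathcal F_p(\mathcal M)}$ and $\mathrm{amen}_p(\mathcal N,\mathcal M)=\|\sum_{x\in\mathcal N\setminus\{0\}}a_x\delta(x)\|_{\mathcal F_p(\mathcal N)}$, then \[\mathrm{amen}_p(\mathcal N,\mathcal M)\le\frac{\|\sum_{x\in\mathcal N\setminus\{0\}}a_x\delta(x)\|_{\mathcal F_p(\mathcal N_T)}}{T_{d_T}(a)}\le\mathrm{amen}_p(\mathcal N_T,\mathcal M_T).\]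
   Context: For $r\in(0,1]$, an $r$-metric space is a set with $d$ such that $d^r$ is a metric (a $q$-metric space is also a $p$-metric space for $p\le q$); pointed means a distinguished point $0$. A $p$-Banach space is a complete vector space with a $p$-norm. $\delta(x)$ is evaluation at $x$ on real functions vanishing at $0$, and $\mathcal F_p$ of a pointed $p$-metric space is the completion of $\mathrm{span}\{\delta(x)\}$ under $\|\sum a_i\delta(x_i)\|=\sup\|\sum a_if(x_i)\|_Y$ over $p$-Banach $Y$ and $1$-Lipschitz $f$ into $Y$ vanishing at $0$. For $0\in\mathcal N\subset\mathcal M$, $L_j$ is the linear map $\delta_{\mathcal N}(x)\mapsto\delta_{\mathcal M}(x)$ and $\mathrm{amen}_p(\mathcal N,\mathcal M)=\|L_j^{-1}\|$ if $L_j$ is an isomorphism onto its range ($+\infty$ otherwise). $\mathcal T(\mathcal M)$ is the set of trees on $\mathcal M$ rooted at $0$; for $x\ne0$, $\mathrm{pred}_T(x)$ is the neighbour of $x$ on the path to $0$, $e_x^T=\{\mathrm{pred}_T(x),x\}$, $V_x^T$ the vertex set of the subtree rooted at $x$. For a metric $\rho$ on $\mathcal M$ and $a$ extended by $0$ to $\mathcal M$, $T_\rho(a)=\big(\sum_{x\in\mathcal M\setminus\{0\}}|(\sum_{y\in V_x^T}a_y)\rho(e_x^T)|^p\big)^{1/p}$. $d_T$ is the $q$-metric on $\mathcal M$ given by $d_T(u,v)=(\sum_{i}d(u_i,u_{i+1})^q)^{1/q}$, where $u=u_1,\dots,u_m=v$ is the path from $u$ to $v$ in $T$; $\mathcal M_T=(\mathcal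 M,d_T,0)$ and $\mathcal N_T=(\mathcal N,d_T,0)$. *)

theory Defs
  imports "HOL-Analysis.Analysis"
begin

definition rmetric_on :: "real \<Rightarrow> 'a set \<Rightarrow> ('a \<Rightarrow> 'a \<Rightarrow> real) \<Rightarrow> bool" where
  "rmetric_on r M d \<longleftrightarrow>
     (\<forall>x\<in>M. \<forall>y\<in>M. 0 \<le> d x y \<and> (d x y = 0 \<longleftrightarrow> x = y) \<and> d x y = d y x) \<and>
     (\<forall>x\<in>M. \<forall>y\<in>M. \<forall>z\<in>M. d x z powr r \<le> d x y powr r + d y z powr r)"

definition pseminorm :: "real \<Rightarrow> (('i \<Rightarrow> real) \<Rightarrow> real) \<Rightarrow> bool" where
  "pseminorm p N \<longleftrightarrow>
     (\<forall>x. 0 \<le> N x) \<and> (\<forall>c x. N (\<lambda>t. c * x t) = \<bar>c\<bar> * N x) \<and>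
     (\<forall>x y. N (\<lambda>t. x t + y t) powr p \<le> N x powr p + N y powr p)"

text \<open>Norm of \<Sum>_{x\<in>A} a_x \<delta>(x) in F_p(S,d,b): supremum of \<parallel>\<Sum> a_x f(x)\<parallel>_Y over
  p-(semi)normed targets Y (realised on the universal space 'a \<Rightarrow> real) and
  1-Lipschitz f : S \<rightarrow> Y with f b = 0.\<close>
definition Fnorm :: "real \<Rightarrow> ('a \<Rightarrow> 'a \<Rightarrow> real) \<Rightarrow> 'a \<Rightarrow> 'a set \<Rightarrow> 'a set \<Rightarrow> ('a \<Rightarrow> real) \<Rightarrow> real" where
  "Fnorm p d b S A a = Sup {N (\<lambda>t. \<Sum>x\<in>A. a x * f x t) | N f.
      pseminorm p (N :: ('a \<Rightarrow> real) \<Rightarrow> real) \<and> (\<forall>t. f b t = 0) \<and>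
      (\<forall>x\<in>S. \<forall>y\<in>S. N (\<lambda>t. f x t - f y t) \<le> d x y)}"

text \<open>amen_p(N,M) = \<parallel>L_j^{-1}\<parallel> (= \<infinity> if L_j is not an isomorphism onto its range).\<close>
definition amen :: "real \<Rightarrow> ('a \<Rightarrow> 'a \<Rightarrow> real) \<Rightarrow> 'a \<Rightarrow> 'a set \<Rightarrow> 'a set \<Rightarrow> ereal" where
  "amen p d b N M = Sup {ereal (Fnorm p d b N (N - {b}) a) | a. Fnorm p d b M (N - {b}) a \<le> 1}"

text \<open>Trees on M rooted at b, represented by their predecessor map par (par b = b).\<close>
definition is_rooted_tree :: "'a set \<Rightarrow> 'a \<Rightarrow> ('a \<Rightarrow> 'a) \<Rightarrow> bool" where
  "is_rooted_tree M b par \<longleftrightarrow> par b = b \<and> (\<forall>x\<in>M. par x \<in> M) \<and> (\<forall>x\<in>M. \<exists>n. (par ^^ n) x = b)"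

definition subtree :: "'a set \<Rightarrow> ('a \<Rightarrow> 'a) \<Rightarrow> 'a \<Rightarrow> 'a set" where
  "subtree M par x = {y\<in>M. \<exists>n. (par ^^ n) y = x}"

definition Ttree :: "real \<Rightarrow> 'a set \<Rightarrow> 'a \<Rightarrow> ('a \<Rightarrow> 'a) \<Rightarrow> ('a \<Rightarrow> 'a \<Rightarrow> real) \<Rightarrow> ('a \<Rightarrow> real) \<Rightarrow> real" where
  "Ttree p M b par \<rho> a =
     (\<Sum>x\<in>M - {b}. \<bar>(\<Sum>y\<in>subtree M par x. a y) * \<rho> (par x) x\<bar> powr p) powr (1 / p)"

text \<open>Edges (indexed by their child endpoint) on the path from u to the root.\<close>
definition root_edges :: "'a set \<Rightarrow> 'a \<Rightarrow> ('a \<Rightarrow> 'a) \<Rightarrow> 'a \<Rightarrow> 'a set" where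
  "root_edges M b par u = {x\<in>M - {b}. u \<in> subtree M par x}"

text \<open>d_T: the edges of the tree path from u to v are the symmetric difference of the
  root paths of u and v.\<close>
definition dT :: "real \<Rightarrow> 'a set \<Rightarrow> 'a \<Rightarrow> ('a \<Rightarrow> 'a) \<Rightarrow> ('a \<Rightarrow> 'a \<Rightarrow> real) \<Rightarrow> 'a \<Rightarrow> 'a \<Rightarrow> real" where
  "dT q M b par d u v =
     (\<Sum>x\<in>(root_edges M b par u - root_edges M b par v) \<union> (root_edges M b par v - root_edges M b par u).
        d (par x) x powr q) powr (1 / q)"

end

theory Submission
  imports Defs
begin

(*
  Each edge of the tree has the same length for d_T as for d, so T_{d_T}(a) = T_d(a).
  Applying the q-triangle inequality along the tree path from u to v gives
  d(u,v)^q <= d_T(u,v)^q; hence d <= d_T, and the norm of sum a_x delta(x), a supremum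
  over 1-Lipschitz maps, can only grow when d is replaced by d_T.
  For the chain of inequalities, summation by parts along the tree rewrites sum a_x f(x)
  as sum_x (sum_{y in V_x} a_y) (f(x) - f(pred x)), so the p-triangle inequality bounds
  the norm in F_p(M_T) by T_{d_T}(a) = T_d(a) = 1; the norm in F_p(N_T) is then one of
  the values in the supremum defining amen_p(N_T, M_T).
*)

lemma rooted_tree_par_in:
  "is_rooted_tree M b par \<Longrightarrow> x \<in> M \<Longrightarrow> par x \<in> M"
  by (simp add: is_rooted_tree_def)

lemma rooted_tree_funpow_root: "is_rooted_tree M b par \<Longrightarrow> (par ^^ n) b = b"
  by (induction n) (auto simp: is_rooted_tree_def)

lemma rooted_tree_induct[consumes 2, case_names step]:
  assumes T: "is_rooted_tree M b par" and x: "x \<in> M"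
    and step: "\<And>x. x \<in> M \<Longrightarrow> (x \<noteq> b \<Longrightarrow> P (par x)) \<Longrightarrow> P x"
  shows "P x"
proof -
  obtain n where "(par ^^ n) x = b" using T x by (auto simp: is_rooted_tree_def)
  then show ?thesis using x
  proof (induction n arbitrary: x)
    case 0
    then show ?case using step[of x] by auto
  next
    case (Suc n)
    then have "P (par x)" using rooted_tree_par_in[OF T]
      by (simp add: funpow_Suc_right del: funpow.simps)
    then show ?case using step Suc.prems(2) by blast
  qed
qed

lemma rooted_tree_acyclic:
  assumes T: "is_rooted_tree M b par" and x: "x \<in> M" and m: "0 < m" and cyc: "(par ^^ m) x = x"
  shows "x = b"
proof -
  obtain k where k: "m = Suc k" using m gr0_implies_Suc by blast
  have "(par ^^ m) x = x \<longrightarrow> x = b" using T x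
  proof (induction rule: rooted_tree_induct)
    case (step x)
    show ?case
    proof
      assume cyc: "(par ^^ m) x = x"
      show "x = b"
      proof (rule ccontr)
        assume "x \<noteq> b"
        have "(par ^^ m) (par x) = par ((par ^^ m) x)" by (rule funpow_swap1[symmetric])
        then have "(par ^^ m) (par x) = par x" using cyc by simp
        then have "par x = b" using step.IH \<open>x \<noteq> b\<close> by blast
        have "x = (par ^^ Suc k) x" using cyc unfolding k by (rule sym)
        also have "\<dots> = (par ^^ k) (par x)" by (simp only: funpow_Suc_right o_apply)
        also have "\<dots> = b" using \<open>par x = b\<close> rooted_tree_funpow_root[OF T] by simp
        finally show False using \<open>x \<noteq> b\<close> by contradiction
      qed
    qed
  qed
  then show ?thesis using cyc by blast
qed

lemma root_edges_root: "is_rooted_tree M b par \<Longrightarrow> root_edges M b par b = {}"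
  by (auto simp: root_edges_def subtree_def rooted_tree_funpow_root)

lemma finite_root_edges: "finite M \<Longrightarrow> finite (root_edges M b par u)"
  by (rule finite_subset[of _ M]) (auto simp: root_edges_def)

lemma root_edges_par:
  assumes T: "is_rooted_tree M b par" and u: "u \<in> M" "u \<noteq> b"
  shows "root_edges M b par u = insert u (root_edges M b par (par u))"
    and "u \<notin> root_edges M b par (par u)"
proof -
  have "(\<exists>n. (par ^^ n) u = x) \<longleftrightarrow> u = x \<or> (\<exists>n. (par ^^ n) (par u) = x)" for x
  proof
    assume "\<exists>n. (par ^^ n) u = x"
    then obtain n where "(par ^^ n) u = x" by blast
    then show "u = x \<or> (\<exists>n. (par ^^ n) (par u) = x)"
      by (cases n) (auto simp: funpow_Suc_right simp del: funpow.simps)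
  next
    assume "u = x \<or> (\<exists>n. (par ^^ n) (par u) = x)"
    then show "\<exists>n. (par ^^ n) u = x"
      by (metis funpow_0 funpow_Suc_right o_apply)
  qed
  then show "root_edges M b par u = insert u (root_edges M b par (par u))"
    using u rooted_tree_par_in[OF T u(1)] by (auto simp: root_edges_def subtree_def)
  show "u \<notin> root_edges M b par (par u)"
  proof
    assume "u \<in> root_edges M b par (par u)"
    then obtain n where "(par ^^ n) (par u) = u" by (auto simp: root_edges_def subtree_def)
    then have "(par ^^ Suc n) u = u" by (simp add: funpow_Suc_right del: funpow.simps)
    then show False using rooted_tree_acyclic[OF T u(1)] u(2) by blast
  qed
qed

lemma root_edges_antisym:
  assumes T: "is_rooted_tree M b par"
    and uv: "u \<in> root_edges M b par v" and vu: "v \<in> root_edges M b par u"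
  shows "u = v"
proof (rule ccontr)
  assume "u \<noteq> v"
  obtain i j where i: "(par ^^ i) v = u" and j: "(par ^^ j) u = v"
    using uv vu by (auto simp: root_edges_def subtree_def)
  have cyc: "(par ^^ (j + i)) v = v" using i j by (simp add: funpow_add)
  have pos: "0 < j + i"
  proof (rule ccontr)
    assume "\<not> 0 < j + i"
    then show False using i \<open>u \<noteq> v\<close> by simp
  qed
  have "v \<in> M" "v \<noteq> b" using vu unfolding root_edges_def by blast+
  then show False using rooted_tree_acyclic[OF T _ pos cyc] by blast
qed

lemma sum_root_edges_telescope:
  fixes f :: "'a \<Rightarrow> 'c::ab_group_add"
  assumes T: "is_rooted_tree M b par" and fin: "finite M" and fb: "f b = 0" and y: "y \<in> M"
  shows "f y = (\<Sum>x\<in>root_edges M b par y. f x - f (par x))"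
  using T y
proof (induction rule: rooted_tree_induct)
  case (step y)
  show ?case
  proof (cases "y = b")
    case True
    then show ?thesis using root_edges_root[OF T] fb by simp
  next
    case False
    note R = root_edges_par[OF T step.hyps False]
    have "(\<Sum>x\<in>root_edges M b par y. f x - f (par x))
        = (f y - f (par y)) + (\<Sum>x\<in>root_edges M b par (par y). f x - f (par x))"
      unfolding R(1) by (rule sum.insert[OF finite_root_edges[OF fin] R(2)])
    moreover have "f (par y) = (\<Sum>x\<in>root_edges M b par (par y). f x - f (par x))"
      using step.IH False by blast
    ultimately show ?thesis by simp
  qed
qed

lemma sum_eq_sum_subtree_edges:
  fixes a f :: "'a \<Rightarrow> 'c::comm_ring"
  assumes T: "is_rooted_tree M b par" and fin: "finite M" and A: "A \<subseteq> M"
    and a: "\<forall>x\<in>M - A. a x = 0" and fb: "f b = 0"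
  shows "(\<Sum>y\<in>A. a y * f y) = (\<Sum>x\<in>M - {b}. (\<Sum>y\<in>subtree M par x. a y) * (f x - f (par x)))"
proof -
  have "(\<Sum>y\<in>A. a y * f y) = (\<Sum>y\<in>M. a y * f y)"
    by (rule sum.mono_neutral_left) (use fin A a in auto)
  also have "\<dots> = (\<Sum>y\<in>M. \<Sum>x\<in>{x. x \<in> M - {b} \<and> y \<in> subtree M par x}. a y * (f x - f (par x)))"
  proof (rule sum.cong)
    fix y assume "y \<in> M"
    then have "f y = (\<Sum>x\<in>root_edges M b par y. f x - f (par x))"
      by (rule sum_root_edges_telescope[OF T fin, of f, OF fb])
    then show "a y * f y = (\<Sum>x\<in>{x. x \<in> M - {b} \<and> y \<in> subtree M par x}. a y * (f x - f (par x)))"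
      by (simp add: sum_distrib_left root_edges_def)
  qed simp
  also have "\<dots> = (\<Sum>x\<in>M - {b}. \<Sum>y\<in>{y. y \<in> M \<and> y \<in> subtree M par x}. a y * (f x - f (par x)))"
    by (rule sum.swap_restrict) (use fin in auto)
  also have "\<dots> = (\<Sum>x\<in>M - {b}. (\<Sum>y\<in>subtree M par x. a y) * (f x - f (par x)))"
    by (simp add: subtree_def sum_distrib_right)
  finally show ?thesis .
qed

definition tree_path :: "'a set \<Rightarrow> 'a \<Rightarrow> ('a \<Rightarrow> 'a) \<Rightarrow> 'a \<Rightarrow> 'a \<Rightarrow> 'a set" where
  "tree_path M b par u v =
     (root_edges M b par u - root_edges M b par v) \<union> (root_edges M b par v - root_edges M b par u)"

lemma dT_eq_tree_path:
  "dT q M b par d u v = (\<Sum>x\<in>tree_path M b par u v. d (par x) x powr q) powr (1 / q)"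
  by (simp add: dT_def tree_path_def)

lemma tree_path_commute: "tree_path M b par u v = tree_path M b par v u"
  by (auto simp: tree_path_def)

lemma finite_tree_path: "finite M \<Longrightarrow> finite (tree_path M b par u v)"
  by (simp add: tree_path_def finite_root_edges)

lemma tree_path_par:
  assumes T: "is_rooted_tree M b par" and u: "u \<in> M" "u \<noteq> b"
    and uv: "u \<notin> root_edges M b par v"
  shows "tree_path M b par u v = insert u (tree_path M b par (par u) v)"
    and "u \<notin> tree_path M b par (par u) v"
  using root_edges_par[OF T u] uv by (auto simp: tree_path_def)

lemma tree_path_par_self:
  assumes T: "is_rooted_tree M b par" and u: "u \<in> M" "u \<noteq> b"
  shows "tree_path M b par (par u) u = {u}"
  using root_edges_par[OF T u] by (auto simp: tree_path_def)

lemma rmetric_on_sym: "rmetric_on r M d \<Longrightarrow> x \<in> M \<Longrightarrow> y \<in> M \<Longrightarrow> d x y = d y x"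
  by (simp add: rmetric_on_def)

lemma rmetric_on_nonneg: "rmetric_on r M d \<Longrightarrow> x \<in> M \<Longrightarrow> y \<in> M \<Longrightarrow> 0 \<le> d x y"
  by (simp add: rmetric_on_def)

lemma rmetric_on_zero: "rmetric_on r M d \<Longrightarrow> x \<in> M \<Longrightarrow> d x x = 0"
  by (simp add: rmetric_on_def)

lemma powr_le_sum_tree_path:
  assumes T: "is_rooted_tree M b par" and fin: "finite M" and d: "rmetric_on q M d"
    and u: "u \<in> M" and v: "v \<in> M"
  shows "d u v powr q \<le> (\<Sum>x\<in>tree_path M b par u v. d (par x) x powr q)"
proof -
  define S where "S u v = (\<Sum>x\<in>tree_path M b par u v. d (par x) x powr q)" for u v
  have peel: "d u v powr q \<le> S u v"
    if u: "u \<in> M" "u \<noteq> b" and v: "v \<in> M" and uv: "u \<notin> root_edges M b par v"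
      and IH: "d (par u) v powr q \<le> S (par u) v" for u v
  proof -
    note P = tree_path_par[OF T u uv]
    have pu: "par u \<in> M" using rooted_tree_par_in[OF T u(1)] .
    have "d u v powr q \<le> d u (par u) powr q + d (par u) v powr q"
      using d u(1) v pu unfolding rmetric_on_def by blast
    also have "\<dots> \<le> d (par u) u powr q + S (par u) v"
      using IH rmetric_on_sym[OF d u(1) pu] by simp
    also have "\<dots> = S u v"
      unfolding S_def P(1) by (rule sum.insert[OF finite_tree_path[OF fin] P(2), symmetric])
    finally show ?thesis .
  qed
  have inner: "d u v powr q \<le> S u v"
    if u: "u \<in> M" and v: "v \<in> M"
      and outer: "u \<noteq> b \<Longrightarrow> \<forall>w\<in>M. d (par u) w powr q \<le> S (par u) w" for u v
    using T v
  proof (induction rule: rooted_tree_induct)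
    case (step v)
    \<comment> \<open>Peel off the edge above an endpoint that is not an ancestor of the other one:
      above u by the outer induction, above v by the inner one.\<close>
    consider "u = v" | "u \<noteq> b" "u \<notin> root_edges M b par v" | "v \<noteq> b" "v \<notin> root_edges M b par u"
      using root_edges_root[OF T] root_edges_antisym[OF T] by blast
    then show ?case
    proof cases
      case 1
      then show ?thesis using rmetric_on_zero[OF d u] by (simp add: S_def tree_path_def)
    next
      case 2
      then show ?thesis using peel u step.hyps outer by blast
    next
      case 3
      have "d (par v) u powr q \<le> S (par v) u"
        using step.IH 3(1) rmetric_on_sym[OF d u rooted_tree_par_in[OF T step.hyps]]
        by (simp add: S_def tree_path_commute)
      then have "d v u powr q \<le> S v u" using peel step.hyps u 3 by blast
      then show ?thesis using rmetric_on_sym[OF d u step.hyps] by (simp add: S_def tree_path_commute)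
    qed
  qed
  have "\<forall>v\<in>M. d u v powr q \<le> S u v" using T u
    by (induction rule: rooted_tree_induct) (use inner in blast)
  then show ?thesis using v by (simp add: S_def)
qed

lemma le_dT:
  assumes T: "is_rooted_tree M b par" and fin: "finite M" and d: "rmetric_on q M d" and q: "0 < q"
    and u: "u \<in> M" and v: "v \<in> M"
  shows "d u v \<le> dT q M b par d u v"
proof -
  have "d u v = (d u v powr q) powr (1 / q)"
    using rmetric_on_nonneg[OF d u v] q by (simp add: powr_powr)
  also have "\<dots> \<le> dT q M b par d u v"
    unfolding dT_eq_tree_path
    by (rule powr_mono2) (use q powr_le_sum_tree_path[OF T fin d u v] in auto)
  finally show ?thesis .
qed

lemma dT_par:
  assumes T: "is_rooted_tree M b par" and d: "rmetric_on q M d" and q: "0 < q"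
    and x: "x \<in> M" "x \<noteq> b"
  shows "dT q M b par d (par x) x = d (par x) x"
  using rmetric_on_nonneg[OF d rooted_tree_par_in[OF T x(1)] x(1)] q
  by (simp add: dT_eq_tree_path tree_path_par_self[OF T x] powr_powr)

lemma Ttree_dT:
  assumes T: "is_rooted_tree M b par" and d: "rmetric_on q M d" and q: "0 < q"
  shows "Ttree p M b par (dT q M b par d) a = Ttree p M b par d a"
  unfolding Ttree_def using dT_par[OF T d q] by simp

lemma pseminorm_nonneg: "pseminorm p N \<Longrightarrow> 0 \<le> N x"
  by (simp add: pseminorm_def)

lemma pseminorm_cmult: "pseminorm p N \<Longrightarrow> N (\<lambda>t. c * x t) = \<bar>c\<bar> * N x"
  by (simp add: pseminorm_def)

lemma pseminorm_zero: "pseminorm p N \<Longrightarrow> N (\<lambda>t. 0) = 0"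
  using pseminorm_cmult[of p N 0 "\<lambda>t. 0"] by simp

lemma pseminorm_minus_commute:
  "pseminorm p N \<Longrightarrow> N (\<lambda>t. x t - y t) = N (\<lambda>t. y t - x t)"
  using pseminorm_cmult[of p N "-1" "\<lambda>t. y t - x t"] by simp

lemma pseminorm_sum_powr_le:
  fixes N :: "('i \<Rightarrow> real) \<Rightarrow> real"
  assumes N: "pseminorm p N" and S: "finite S"
  shows "N (\<lambda>t. \<Sum>x\<in>S. h x t) powr p \<le> (\<Sum>x\<in>S. N (h x) powr p)"
  using S
proof (induction S rule: finite_induct)
  case empty
  then show ?case using pseminorm_zero[OF N] by simp
next
  case (insert x S)
  have "N (\<lambda>t. \<Sum>y\<in>insert x S. h y t) powr p = N (\<lambda>t. h x t + (\<Sum>y\<in>S. h y t)) powr p"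
    using insert by simp
  also have "\<dots> \<le> N (h x) powr p + N (\<lambda>t. \<Sum>y\<in>S. h y t) powr p"
    using N unfolding pseminorm_def by (metis eta_contract_eq)
  finally show ?case using insert by simp
qed

lemma pseminorm_sum_le:
  fixes N :: "('i \<Rightarrow> real) \<Rightarrow> real"
  assumes N: "pseminorm p N" and p: "0 < p" and S: "finite S"
    and g: "\<And>x. x \<in> S \<Longrightarrow> N (g x) \<le> r x"
  shows "N (\<lambda>t. \<Sum>x\<in>S. c x * g x t) \<le> (\<Sum>x\<in>S. \<bar>c x * r x\<bar> powr p) powr (1 / p)"
proof -
  have "N (\<lambda>t. \<Sum>x\<in>S. c x * g x t) powr p \<le> (\<Sum>x\<in>S. N (\<lambda>t. c x * g x t) powr p)"
    by (rule pseminorm_sum_powr_le[OF N S])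
  also have "\<dots> \<le> (\<Sum>x\<in>S. \<bar>c x * r x\<bar> powr p)"
  proof (rule sum_mono)
    fix x assume "x \<in> S"
    then have "N (g x) \<le> r x" by (rule g)
    moreover have "0 \<le> N (g x)" by (rule pseminorm_nonneg[OF N])
    ultimately have "\<bar>c x\<bar> * N (g x) \<le> \<bar>c x * r x\<bar>"
      by (simp add: abs_mult mult_left_mono)
    then show "N (\<lambda>t. c x * g x t) powr p \<le> \<bar>c x * r x\<bar> powr p"
      using pseminorm_nonneg[OF N] p by (simp add: pseminorm_cmult[OF N] powr_mono2)
  qed
  finally have le: "N (\<lambda>t. \<Sum>x\<in>S. c x * g x t) powr p \<le> (\<Sum>x\<in>S. \<bar>c x * r x\<bar> powr p)" .
  have "N (\<lambda>t. \<Sum>x\<in>S. c x * g x t) = (N (\<lambda>t. \<Sum>x\<in>S. c x * g x t) powr p) powr (1 / p)"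
    using pseminorm_nonneg[OF N] p by (simp add: powr_powr)
  also have "\<dots> \<le> (\<Sum>x\<in>S. \<bar>c x * r x\<bar> powr p) powr (1 / p)"
    by (rule powr_mono2) (use le p in auto)
  finally show ?thesis .
qed

definition Fnorm_set :: "real \<Rightarrow> ('a \<Rightarrow> 'a \<Rightarrow> real) \<Rightarrow> 'a \<Rightarrow> 'a set \<Rightarrow> 'a set \<Rightarrow> ('a \<Rightarrow> real) \<Rightarrow> real set" where
  "Fnorm_set p d b S A a = {N (\<lambda>t. \<Sum>x\<in>A. a x * f x t) | N f.
      pseminorm p (N :: ('a \<Rightarrow> real) \<Rightarrow> real) \<and> (\<forall>t. f b t = 0) \<and>
      (\<forall>x\<in>S. \<forall>y\<in>S. N (\<lambda>t. f x t - f y t) \<le> d x y)}"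

lemma Fnorm_eq_Sup: "Fnorm p d b S A a = Sup (Fnorm_set p d b S A a)"
  by (simp add: Fnorm_def Fnorm_set_def)

lemma zero_in_Fnorm_set:
  assumes "\<And>x y. x \<in> S \<Longrightarrow> y \<in> S \<Longrightarrow> 0 \<le> \<rho> x y"
  shows "0 \<in> Fnorm_set p \<rho> b S A a"
proof -
  have "pseminorm p (\<lambda>_::'a \<Rightarrow> real. 0::real)" by (simp add: pseminorm_def)
  then show ?thesis
    unfolding Fnorm_set_def using assms by (auto intro!: exI[of _ "\<lambda>_ _. 0"])
qed

lemma Fnorm_set_le:
  assumes p: "0 < p" and b: "b \<in> S" and A: "A \<subseteq> S" "finite A"
    and z: "z \<in> Fnorm_set p \<rho> b S A a"
  shows "z \<le> (\<Sum>y\<in>A. \<bar>a y * \<rho> y b\<bar> powr p) powr (1 / p)"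
proof -
  obtain N :: "('a \<Rightarrow> real) \<Rightarrow> real" and f where z: "z = N (\<lambda>t. \<Sum>x\<in>A. a x * f x t)"
    and N: "pseminorm p N" and fb: "\<forall>t. f b t = 0"
    and lip: "\<forall>x\<in>S. \<forall>y\<in>S. N (\<lambda>t. f x t - f y t) \<le> \<rho> x y"
    using z unfolding Fnorm_set_def by blast
  have "N (f y) \<le> \<rho> y b" if "y \<in> A" for y
    using lip that A(1) b fb by fastforce
  then show ?thesis unfolding z by (rule pseminorm_sum_le[OF N p A(2)])
qed

lemma Fnorm_mono:
  assumes p: "0 < p" and b: "b \<in> S" and A: "A \<subseteq> S" "finite A"
    and nonneg: "\<And>x y. x \<in> S \<Longrightarrow> y \<in> S \<Longrightarrow> 0 \<le> \<rho> x y"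
    and le: "\<And>x y. x \<in> S \<Longrightarrow> y \<in> S \<Longrightarrow> \<rho> x y \<le> \<rho>' x y"
  shows "Fnorm p \<rho> b S A a \<le> Fnorm p \<rho>' b S A a"
  unfolding Fnorm_eq_Sup
proof (rule cSup_subset_mono)
  have "0 \<in> Fnorm_set p \<rho> b S A a" by (rule zero_in_Fnorm_set) (rule nonneg)
  then show "Fnorm_set p \<rho> b S A a \<noteq> {}" by blast
  show "bdd_above (Fnorm_set p \<rho>' b S A a)"
    using Fnorm_set_le[OF p b A] by (rule bdd_aboveI)
  show "Fnorm_set p \<rho> b S A a \<subseteq> Fnorm_set p \<rho>' b S A a"
  proof
    fix z assume "z \<in> Fnorm_set p \<rho> b S A a"
    then obtain N :: "('a \<Rightarrow> real) \<Rightarrow> real" and f where z: "z = N (\<lambda>t. \<Sum>x\<in>A. a x * f x t)"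
      and N: "pseminorm p N" and fb: "\<forall>t. f b t = 0"
      and lip: "\<forall>x\<in>S. \<forall>y\<in>S. N (\<lambda>t. f x t - f y t) \<le> \<rho> x y"
      unfolding Fnorm_set_def by blast
    have "\<forall>x\<in>S. \<forall>y\<in>S. N (\<lambda>t. f x t - f y t) \<le> \<rho>' x y"
      using lip le by (meson order_trans)
    then show "z \<in> Fnorm_set p \<rho>' b S A a"
      unfolding Fnorm_set_def using z N fb by blast
  qed
qed

lemma Fnorm_le_Ttree:
  assumes T: "is_rooted_tree M b par" and fin: "finite M" and p: "0 < p"
    and A: "A \<subseteq> M" and a: "\<forall>x\<in>M - A. a x = 0"
    and nonneg: "\<And>x y. x \<in> M \<Longrightarrow> y \<in> M \<Longrightarrow> 0 \<le> \<rho> x y"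
  shows "Fnorm p \<rho> b M A a \<le> Ttree p M b par \<rho> a"
  unfolding Fnorm_eq_Sup
proof (rule cSup_least)
  have "0 \<in> Fnorm_set p \<rho> b M A a" by (rule zero_in_Fnorm_set) (rule nonneg)
  then show "Fnorm_set p \<rho> b M A a \<noteq> {}" by blast
next
  fix z assume "z \<in> Fnorm_set p \<rho> b M A a"
  then obtain N :: "('a \<Rightarrow> real) \<Rightarrow> real" and f where z: "z = N (\<lambda>t. \<Sum>x\<in>A. a x * f x t)"
    and N: "pseminorm p N" and fb: "\<forall>t. f b t = 0"
    and lip: "\<forall>x\<in>M. \<forall>y\<in>M. N (\<lambda>t. f x t - f y t) \<le> \<rho> x y"
    unfolding Fnorm_set_def by blast
  have edge: "N (\<lambda>t. f x t - f (par x) t) \<le> \<rho> (par x) x" if "x \<in> M - {b}" for x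
    using lip that rooted_tree_par_in[OF T] pseminorm_minus_commute[OF N] by fastforce
  have "z = N (\<lambda>t. \<Sum>x\<in>M - {b}. (\<Sum>y\<in>subtree M par x. a y) * (f x t - f (par x) t))"
    using z sum_eq_sum_subtree_edges[OF T fin A a, of "\<lambda>x. f x t" for t] fb by simp
  also have "\<dots> \<le> (\<Sum>x\<in>M - {b}. \<bar>(\<Sum>y\<in>subtree M par x. a y) * \<rho> (par x) x\<bar> powr p) powr (1 / p)"
    by (rule pseminorm_sum_le[OF N p]) (use fin edge in auto)
  finally show "z \<le> Ttree p M b par \<rho> a" by (simp only: Ttree_def)
qed

lemma ereal_Fnorm_le_amen:
  "Fnorm p d b M (N - {b}) a \<le> 1 \<Longrightarrow> ereal (Fnorm p d b N (N - {b}) a) \<le> amen p d b N M"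
  unfolding amen_def by (rule Sup_upper) blast

theorem lemma3p12:
  fixes p q :: real and M N :: "'a set" and b :: 'a and d :: "'a \<Rightarrow> 'a \<Rightarrow> real"
    and a :: "'a \<Rightarrow> real" and par :: "'a \<Rightarrow> 'a"
  assumes "0 < p" "p \<le> q" "q \<le> 1"
    and "finite M" "rmetric_on q M d"
    and "b \<in> N" "N \<subseteq> M"
    and "\<forall>x. x \<notin> N - {b} \<longrightarrow> a x = 0"
    and "is_rooted_tree M b par"
  shows "Ttree p M b par (dT q M b par d) a = Ttree p M b par d a
    \<and> Fnorm p (dT q M b par d) b N (N - {b}) a \<ge> Fnorm p d b N (N - {b}) a
    \<and> ((Ttree p M b par d a = 1 \<and> Fnorm p d b M (N - {b}) a = 1
         \<and> amen p d b N M = ereal (Fnorm p d b N (N - {b}) a))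
       \<longrightarrow> amen p d b N M
             \<le> ereal (Fnorm p (dT q M b par d) b N (N - {b}) a / Ttree p M b par (dT q M b par d) a)
         \<and> ereal (Fnorm p (dT q M b par d) b N (N - {b}) a / Ttree p M b par (dT q M b par d) a)
             \<le> amen p (dT q M b par d) b N M)"
proof -
  note p = assms(1) and fin = assms(4) and d = assms(5) and bN = assms(6) and NM = assms(7)
    and a = assms(8) and T = assms(9)
  have q: "0 < q" using assms(1,2) by linarith
  have Ttree_eq: "Ttree p M b par (dT q M b par d) a = Ttree p M b par d a"
    by (rule Ttree_dT[OF T d q])
  have finN: "finite (N - {b})" using fin NM finite_subset by blast
  have Fnorm_N: "Fnorm p d b N (N - {b}) a \<le> Fnorm p (dT q M b par d) b N (N - {b}) a"
    by (rule Fnorm_mono[OF p bN _ finN])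
      (use NM in \<open>auto intro: rmetric_on_nonneg[OF d] le_dT[OF T fin d q]\<close>)
  have Fnorm_M: "Fnorm p (dT q M b par d) b M (N - {b}) a \<le> Ttree p M b par d a"
    using Fnorm_le_Ttree[OF T fin p, of "N - {b}" a "dT q M b par d"] NM a Ttree_eq
    by (auto simp: dT_def)
  show ?thesis
    using Ttree_eq Fnorm_N Fnorm_M ereal_Fnorm_le_amen[of p "dT q M b par d" b M N a] by auto
qed

end
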